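(* Let $\mathcal{A}_1,\dots,\mathcal{A}_k$ be affine arrangements in vector spaces $V_1,\dots,V_k$ such that each cone $\mathbf{c}\mathcal{A}_i$ is free. Then the cone $\mathbf{c}(\mathcal{A}_1\oplus\cdots\oplus\mathcal{A}_k)$ is free.
   Context: An affine arrangement $\mathcal{A}$ in $V$ is a finite set of affine hyperplanes $\{v:\alpha(v)=c\}$ ($\alpha\in V^*\setminus\{0\}$, $c$ a scalar). Its cone $\mathbf{c}\mathcal{A}$ is the central arrangement in $\mathbb{K}\times V$ (coordinates $(x_0,v)$) consisting of the hyperplanes $\{\alpha(v)-cx_0=0\}$ for each affine hyperplane $\{\alpha=c\}\in\mathcal{A}$, together with $\{x_0=0\}$. The direct sum $\mathcal{A}_1\oplus\cdots\oplus\mathcal{A}_k$ is the affine arrangement in $V_1\times\cdots\times V_k$ consisting of $V_1\times\cdots\times H\times\cdots\times V_k$ for $H\in\mathcal{A}_i$, $i=1,\dots,k$. A central arrangement is free if its module of logarithmic vector fields $D=\{\delta\in\mathrm{Der}:\delta(\alpha_H)\in\alpha_HS\ \forall H\}$ is a free module over the polynomial ring $S$. *)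

theory Defs
  imports Main "HOL-Library.Poly_Mapping"
begin

text \<open>The polynomial ring S = K[Y] for a finite variable set Y is the set of
  polynomials all of whose monomials only involve variables in Y.\<close>

type_synonym ('w, 'k) mpoly = "('w \<Rightarrow>\<^sub>0 nat) \<Rightarrow>\<^sub>0 'k"

definition poly_in :: "'w set \<Rightarrow> ('w, 'k::zero) mpoly \<Rightarrow> bool" where
  "poly_in Y p \<longleftrightarrow> (\<forall>m \<in> Poly_Mapping.keys p. Poly_Mapping.keys m \<subseteq> Y)"

definition const_poly :: "'k::zero \<Rightarrow> ('w, 'k) mpoly" where
  "const_poly c = Poly_Mapping.single 0 c"

definition lin_poly :: "'w set \<Rightarrow> ('w \<Rightarrow> 'k::comm_ring_1) \<Rightarrow> ('w, 'k) mpoly" where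
  "lin_poly Y a = (\<Sum>w\<in>Y. Poly_Mapping.single (Poly_Mapping.single w 1) (a w))"

text \<open>A derivation of S = K[Y] (an element of Der_K(S) = free S-module on the
  partial derivatives), given by its coefficients theta(x_w).\<close>
definition is_der :: "'w set \<Rightarrow> ('w \<Rightarrow> ('w, 'k::zero) mpoly) \<Rightarrow> bool" where
  "is_der Y \<theta> \<longleftrightarrow> (\<forall>w\<in>Y. poly_in Y (\<theta> w)) \<and> (\<forall>w. w \<notin> Y \<longrightarrow> \<theta> w = 0)"

definition der_apply :: "'w set \<Rightarrow> ('w \<Rightarrow> ('w, 'k::comm_ring_1) mpoly) \<Rightarrow> ('w \<Rightarrow> 'k) \<Rightarrow> ('w, 'k) mpoly" where
  "der_apply Y \<theta> a = (\<Sum>w\<in>Y. const_poly (a w) * \<theta> w)"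

text \<open>Module of logarithmic derivations D(A) of a central arrangement A in K^Y,
  each hyperplane given by a defining linear form a : 'w \<Rightarrow> 'k.\<close>
definition log_ders :: "'w set \<Rightarrow> ('w \<Rightarrow> 'k::comm_ring_1) set \<Rightarrow> ('w \<Rightarrow> ('w, 'k) mpoly) set" where
  "log_ders Y A = {\<theta>. is_der Y \<theta> \<and>
     (\<forall>a\<in>A. \<exists>q. poly_in Y q \<and> der_apply Y \<theta> a = lin_poly Y a * q)}"

definition free_arr :: "'w set \<Rightarrow> ('w \<Rightarrow> 'k::comm_ring_1) set \<Rightarrow> bool" where
  "free_arr Y A \<longleftrightarrow> (\<exists>B. finite B \<and> B \<subseteq> log_ders Y A \<and>
     (\<forall>\<theta>\<in>log_ders Y A. \<exists>!c. (\<forall>b\<in>B. poly_in Y (c b)) \<and> (\<forall>b. b \<notin> B \<longrightarrow> c b = 0) \<and>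
         \<theta> = (\<lambda>w. \<Sum>b\<in>B. c b * b w)))"

text \<open>Affine hyperplanes in V = K^X (X a finite coordinate set) are given by pairs
  (alpha, c) meaning {v. alpha(v) = c}, with alpha a nonzero linear form
  supported on X.\<close>
definition aff_hyp :: "'v set \<Rightarrow> ('v \<Rightarrow> 'k::zero) \<Rightarrow> 'k \<Rightarrow> bool" where
  "aff_hyp X \<alpha> c \<longleftrightarrow> (\<exists>v\<in>X. \<alpha> v \<noteq> 0) \<and> (\<forall>v. v \<notin> X \<longrightarrow> \<alpha> v = 0)"

definition aff_arr :: "'v set \<Rightarrow> (('v \<Rightarrow> 'k::zero) \<times> 'k) set \<Rightarrow> bool" where
  "aff_arr X A \<longleftrightarrow> finite A \<and> (\<forall>(\<alpha>, c)\<in>A. aff_hyp X \<alpha> c)"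

text \<open>Cone: coordinates of K x V are 'v option, None being x_0.\<close>
definition cone_vars :: "'v set \<Rightarrow> 'v option set" where
  "cone_vars X = insert None (Some ` X)"

definition cone :: "(('v \<Rightarrow> 'k::comm_ring_1) \<times> 'k) set \<Rightarrow> ('v option \<Rightarrow> 'k) set" where
  "cone A = insert (\<lambda>u. if u = None then 1 else 0)
     ((\<lambda>(\<alpha>, c). \<lambda>u. case u of None \<Rightarrow> - c | Some v \<Rightarrow> \<alpha> v) ` A)"

text \<open>Direct sum of A_0,...,A_{k-1} in V_0 x ... x V_{k-1}; coordinates (i, v).\<close>
definition dsum_vars :: "nat \<Rightarrow> (nat \<Rightarrow> 'v set) \<Rightarrow> (nat \<times> 'v) set" where
  "dsum_vars k X = {(i, v). i < k \<and> v \<in> X i}"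

definition dsum :: "nat \<Rightarrow> (nat \<Rightarrow> (('v \<Rightarrow> 'k::zero) \<times> 'k) set) \<Rightarrow> ((nat \<times> 'v \<Rightarrow> 'k) \<times> 'k) set" where
  "dsum k A = (\<Union>i<k. (\<lambda>(\<alpha>, c). (\<lambda>(j, v). if j = i then \<alpha> v else 0, c)) ` A i)"

end

theory Submission
  imports Defs
begin

text \<open>A logarithmic derivation of \<open>c(A\<^sub>1 \<oplus> A\<^sub>2)\<close> is the same as a pair of logarithmic
  derivations of \<open>c(A\<^sub>1)\<close> and \<open>c(A\<^sub>2)\<close>, extended to all coordinates, that agree on the
  common coordinate \<open>x\<^sub>0\<close>. Extending scalars to the big polynomial ring keeps each
  factor free, since that ring is free over the small one on the monomials in the other
  variables. From bases \<open>C\<close> and \<open>B\<close> of the two factors one then obtains a basis of the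
  glued module: lift \<open>C\<close> and all but one element of \<open>B\<close>, using the Euler derivation to
  match the \<open>x\<^sub>0\<close>-coefficients.\<close>

section \<open>Polynomials as finitely supported maps\<close>

lemma poly_mapping_sum_single:
  "p = (\<Sum>m\<in>Poly_Mapping.keys p. Poly_Mapping.single m (Poly_Mapping.lookup p m))"
  by (rule poly_mapping_eqI) (simp add: lookup_sum lookup_single when_def sum.delta' in_keys_iff)

lemma single_mult_eq_sum:
  fixes q :: "'a::cancel_comm_monoid_add \<Rightarrow>\<^sub>0 'b::comm_ring_1"
  shows "Poly_Mapping.single e c * q =
    (\<Sum>m\<in>Poly_Mapping.keys q. Poly_Mapping.single (e + m) (c * Poly_Mapping.lookup q m))"
  by (subst poly_mapping_sum_single[of q]) (simp add: sum_distrib_left mult_single)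

lemma lookup_single_mult:
  fixes q :: "'a::cancel_comm_monoid_add \<Rightarrow>\<^sub>0 'b::comm_ring_1"
  shows "Poly_Mapping.lookup (Poly_Mapping.single e c * q) (e + n) = c * Poly_Mapping.lookup q n"
  by (simp add: single_mult_eq_sum lookup_sum lookup_single when_def sum.delta' in_keys_iff)

lemma lookup_single_mult_eq_0:
  fixes q :: "'a::cancel_comm_monoid_add \<Rightarrow>\<^sub>0 'b::comm_ring_1"
  assumes "\<And>x. n \<noteq> e + x"
  shows "Poly_Mapping.lookup (Poly_Mapping.single e c * q) n = 0"
proof -
  have "e + m \<noteq> n" for m
    using assms by metis
  then show ?thesis
    by (simp add: single_mult_eq_sum lookup_sum lookup_single when_def)
qed

lemma single_one_mult_cancel:
  fixes q q' :: "'a::cancel_comm_monoid_add \<Rightarrow>\<^sub>0 'b::comm_ring_1"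
  assumes "Poly_Mapping.single e 1 * q = Poly_Mapping.single e 1 * q'"
  shows "q = q'"
proof (rule poly_mapping_eqI)
  fix n
  show "Poly_Mapping.lookup q n = Poly_Mapping.lookup q' n"
    using arg_cong[OF assms, of "\<lambda>p. Poly_Mapping.lookup p (e + n)"]
    by (simp add: lookup_single_mult)
qed

lemma lookup_map_key:
  assumes [transfer_rule]: "inj f"
  shows "Poly_Mapping.lookup (Poly_Mapping.map_key f p) x = Poly_Mapping.lookup p (f x)"
  by transfer simp

text \<open>The push-forward along an injective map, a one-sided inverse of
  \<^const>\<open>Poly_Mapping.map_key\<close>.\<close>

definition push_key :: "('a \<Rightarrow> 'b) \<Rightarrow> ('a \<Rightarrow>\<^sub>0 'c::comm_monoid_add) \<Rightarrow> 'b \<Rightarrow>\<^sub>0 'c" where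
  "push_key f p = (\<Sum>m\<in>Poly_Mapping.keys p. Poly_Mapping.single (f m) (Poly_Mapping.lookup p m))"

lemma push_key_zero [simp]: "push_key f 0 = 0"
  by (simp add: push_key_def)

context
  fixes f :: "'a \<Rightarrow> 'b"
  assumes inj_f: "inj f"
begin

lemma lookup_push_key:
  "Poly_Mapping.lookup (push_key f p) n = (if n \<in> range f then Poly_Mapping.lookup p (inv f n) else 0)"
proof (cases "n \<in> range f")
  case True
  then obtain m where "n = f m" by auto
  then show ?thesis
    using inj_f by (simp add: push_key_def lookup_sum lookup_single when_def inj_eq sum.delta' in_keys_iff)
next
  case False
  then have "f m \<noteq> n" for m by auto
  then show ?thesis using False by (simp add: push_key_def lookup_sum lookup_single when_def)
qed

lemma lookup_push_key_image [simp]: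
  "Poly_Mapping.lookup (push_key f p) (f m) = Poly_Mapping.lookup p m"
  using inj_f by (simp add: lookup_push_key)

lemma lookup_push_key_notin:
  "n \<notin> range f \<Longrightarrow> Poly_Mapping.lookup (push_key f p) n = 0"
  by (simp add: lookup_push_key)

lemma keys_push_key: "Poly_Mapping.keys (push_key f p) = f ` Poly_Mapping.keys p"
proof -
  have "n \<in> Poly_Mapping.keys (push_key f p) \<longleftrightarrow> n \<in> f ` Poly_Mapping.keys p" for n
    by (cases "n \<in> range f") (auto simp: in_keys_iff lookup_push_key inv_f_f[OF inj_f])
  then show ?thesis by blast
qed

lemma push_key_add: "push_key f (p + q) = push_key f p + push_key f q"
  by (rule poly_mapping_eqI) (simp add: lookup_push_key lookup_add)

lemma push_key_sum: "push_key f (sum g A) = (\<Sum>a\<in>A. push_key f (g a))"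
  by (induction A rule: infinite_finite_induct) (simp_all add: push_key_add)

lemma push_key_single [simp]:
  "push_key f (Poly_Mapping.single a c) = Poly_Mapping.single (f a) c"
proof (rule poly_mapping_eqI)
  fix n
  show "Poly_Mapping.lookup (push_key f (Poly_Mapping.single a c)) n =
      Poly_Mapping.lookup (Poly_Mapping.single (f a) c) n"
    by (cases "n \<in> range f") (auto simp: lookup_push_key lookup_single when_def inv_f_f[OF inj_f] inj_eq[OF inj_f])
qed

lemma inj_push_key: "inj (push_key f :: ('a \<Rightarrow>\<^sub>0 'c::comm_monoid_add) \<Rightarrow> _)"
  by (rule injI, rule poly_mapping_eqI) (metis lookup_push_key_image)

end

lemma push_key_mult:
  fixes p q :: "'a::comm_monoid_add \<Rightarrow>\<^sub>0 'c::comm_ring_1"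
  assumes inj_f: "inj f" and f_add: "\<And>a b. f (a + b) = f a + f b"
  shows "push_key f (p * q) = push_key f p * push_key f q"
proof -
  let ?P = "\<lambda>a. Poly_Mapping.single a (Poly_Mapping.lookup p a)"
  let ?Q = "\<lambda>b. Poly_Mapping.single b (Poly_Mapping.lookup q b)"
  have "push_key f (p * q) = push_key f ((\<Sum>a\<in>Poly_Mapping.keys p. ?P a) * (\<Sum>b\<in>Poly_Mapping.keys q. ?Q b))"
    by (simp only: poly_mapping_sum_single[symmetric])
  also have "\<dots> = (\<Sum>a\<in>Poly_Mapping.keys p. \<Sum>b\<in>Poly_Mapping.keys q. push_key f (?P a * ?Q b))"
    by (subst sum_distrib_right) (simp only: sum_distrib_left push_key_sum[OF inj_f])
  also have "\<dots> = (\<Sum>a\<in>Poly_Mapping.keys p. push_key f (?P a)) * (\<Sum>b\<in>Poly_Mapping.keys q. push_key f (?Q b))"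
    by (subst sum_distrib_right) (simp only: mult_single push_key_single[OF inj_f] f_add sum_distrib_left)
  also have "\<dots> = push_key f p * push_key f q"
    by (simp only: push_key_single[OF inj_f]) (simp only: push_key_def)
  finally show ?thesis .
qed

section \<open>Polynomials in a set of variables\<close>

lemma poly_in_zero [simp]: "poly_in Y 0"
  by (simp add: poly_in_def)

lemma poly_in_add: "poly_in Y p \<Longrightarrow> poly_in Y q \<Longrightarrow> poly_in Y (p + q)"
  unfolding poly_in_def using keys_add[of p q] by blast

lemma poly_in_diff: "poly_in Y p \<Longrightarrow> poly_in Y q \<Longrightarrow> poly_in Y (p - q)"
  unfolding poly_in_def using keys_diff[of p q] by blast

lemma poly_in_uminus: "poly_in Y p \<Longrightarrow> poly_in Y (- p)"
  by (simp add: poly_in_def)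

lemma poly_in_single: "Poly_Mapping.keys m \<subseteq> Y \<Longrightarrow> poly_in Y (Poly_Mapping.single m c)"
  by (simp add: poly_in_def)

lemma poly_in_mult:
  fixes p q :: "('w, 'k::comm_ring_1) mpoly"
  assumes "poly_in Y p" "poly_in Y q"
  shows "poly_in Y (p * q)"
  unfolding poly_in_def
proof
  fix m assume "m \<in> Poly_Mapping.keys (p * q)"
  then obtain a b where "m = a + b" "a \<in> Poly_Mapping.keys p" "b \<in> Poly_Mapping.keys q"
    using keys_mult[of p q] by blast
  then show "Poly_Mapping.keys m \<subseteq> Y"
    using assms keys_add[of a b] unfolding poly_in_def by blast
qed

lemma poly_in_sum: "(\<And>i. i \<in> I \<Longrightarrow> poly_in Y (f i)) \<Longrightarrow> poly_in Y (sum f I)"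
  by (induction I rule: infinite_finite_induct) (auto intro: poly_in_add)

lemma const_poly_0 [simp]: "const_poly 0 = 0"
  by (simp add: const_poly_def)

lemma const_poly_1 [simp]: "const_poly 1 = (1 :: ('w, 'k::comm_ring_1) mpoly)"
  by (simp add: const_poly_def)

lemma poly_in_const [simp]: "poly_in Y (const_poly c)"
  unfolding const_poly_def by (rule poly_in_single) simp

lemma poly_in_one [simp]: "poly_in Y (1 :: ('w, 'k::comm_ring_1) mpoly)"
  using poly_in_const[of Y "1::'k"] by (simp add: const_poly_def)

lemma poly_in_mono: "poly_in Y p \<Longrightarrow> Y \<subseteq> Z \<Longrightarrow> poly_in Z p"
  unfolding poly_in_def by blast

definition var :: "'w \<Rightarrow> ('w, 'k::comm_ring_1) mpoly" where
  "var w = Poly_Mapping.single (Poly_Mapping.single w 1) 1"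

lemma poly_in_var: "w \<in> Y \<Longrightarrow> poly_in Y (var w)"
  unfolding var_def by (rule poly_in_single) simp

lemma var_neq_zero: "var w \<noteq> 0"
  unfolding var_def by (metis lookup_single_eq lookup_zero one_neq_zero)

lemma var_mult_cancel: "var w * p = var w * q \<Longrightarrow> p = q"
  unfolding var_def by (rule single_one_mult_cancel)

lemma const_poly_mult_var: "const_poly a * var w = Poly_Mapping.single (Poly_Mapping.single w 1) a"
  by (simp add: var_def const_poly_def mult_single)

definition divides_in :: "'w set \<Rightarrow> ('w, 'k::comm_ring_1) mpoly \<Rightarrow> ('w, 'k) mpoly \<Rightarrow> bool" where
  "divides_in Y p r \<longleftrightarrow> (\<exists>q. poly_in Y q \<and> r = p * q)"

lemma divides_in_add: "divides_in Y p r \<Longrightarrow> divides_in Y p s \<Longrightarrow> divides_in Y p (r + s)"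
  unfolding divides_in_def by (metis distrib_left poly_in_add)

lemma divides_in_mult_left: "poly_in Y s \<Longrightarrow> divides_in Y p r \<Longrightarrow> divides_in Y p (s * r)"
  unfolding divides_in_def by (metis mult.left_commute poly_in_mult)

section \<open>Derivations and logarithmic derivations\<close>

lemma lin_poly_eq_sum:
  assumes "finite Y" "Z \<subseteq> Y" "\<And>w. w \<in> Y \<Longrightarrow> w \<notin> Z \<Longrightarrow> a w = 0"
  shows "lin_poly Y a = (\<Sum>w\<in>Z. const_poly (a w) * var w)"
  unfolding lin_poly_def const_poly_mult_var using assms by (intro sum.mono_neutral_right) auto

lemma der_apply_eq_sum:
  assumes "finite Y" "Z \<subseteq> Y" "\<And>w. w \<in> Y \<Longrightarrow> w \<notin> Z \<Longrightarrow> a w = 0"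
  shows "der_apply Y \<theta> a = (\<Sum>w\<in>Z. const_poly (a w) * \<theta> w)"
  unfolding der_apply_def using assms by (intro sum.mono_neutral_right) auto

lemma der_apply_add: "der_apply Y (\<lambda>w. \<theta> w + \<eta> w) a = der_apply Y \<theta> a + der_apply Y \<eta> a"
  unfolding der_apply_def by (simp add: distrib_left sum.distrib)

lemma der_apply_smult: "der_apply Y (\<lambda>w. s * \<theta> w) a = s * der_apply Y \<theta> a"
  unfolding der_apply_def by (simp add: sum_distrib_left mult.left_commute)

definition x0_form :: "'w option \<Rightarrow> 'k::comm_ring_1" where
  "x0_form u = (if u = None then 1 else 0)"

lemma lin_poly_x0_form:
  assumes "finite Y" "None \<in> Y"
  shows "lin_poly Y x0_form = var None"
proof -
  have "lin_poly Y x0_form = (\<Sum>w\<in>{None}. const_poly (x0_form w) * var w)"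
    by (rule lin_poly_eq_sum) (use assms in \<open>auto simp: x0_form_def\<close>)
  then show ?thesis by (simp add: x0_form_def)
qed

lemma der_apply_x0_form:
  assumes "finite Y" "None \<in> Y"
  shows "der_apply Y \<theta> x0_form = \<theta> None"
proof -
  have "der_apply Y \<theta> x0_form = (\<Sum>w\<in>{None}. const_poly (x0_form w) * \<theta> w)"
    by (rule der_apply_eq_sum) (use assms in \<open>auto simp: x0_form_def\<close>)
  then show ?thesis by (simp add: x0_form_def)
qed

definition log_ders_on :: "'w set \<Rightarrow> 'w set \<Rightarrow> ('w \<Rightarrow> 'k::comm_ring_1) set \<Rightarrow> ('w \<Rightarrow> ('w, 'k) mpoly) set" where
  "log_ders_on Y Z A = {\<theta>. is_der Y \<theta> \<and> (\<forall>w. w \<notin> Z \<longrightarrow> \<theta> w = 0) \<and>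
     (\<forall>a\<in>A. divides_in Y (lin_poly Y a) (der_apply Y \<theta> a))}"

lemma log_ders_eq_log_ders_on: "log_ders Y A = log_ders_on Y Y A"
  unfolding log_ders_def log_ders_on_def is_der_def divides_in_def by auto

lemma log_ders_on_zero: "(\<lambda>w. 0) \<in> log_ders_on Y Z A"
  unfolding log_ders_on_def is_der_def divides_in_def der_apply_def by (auto intro: exI[of _ 0])

lemma log_ders_on_add:
  assumes "\<theta> \<in> log_ders_on Y Z A" "\<eta> \<in> log_ders_on Y Z A"
  shows "(\<lambda>w. \<theta> w + \<eta> w) \<in> log_ders_on Y Z A"
  using assms unfolding log_ders_on_def is_der_def
  by (auto simp: der_apply_add intro: poly_in_add divides_in_add)

lemma log_ders_on_smult:
  assumes "\<theta> \<in> log_ders_on Y Z A" "poly_in Y s"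
  shows "(\<lambda>w. s * \<theta> w) \<in> log_ders_on Y Z A"
  using assms unfolding log_ders_on_def is_der_def
  by (auto simp: der_apply_smult intro: poly_in_mult divides_in_mult_left)

lemma log_ders_on_diff:
  assumes "\<theta> \<in> log_ders_on Y Z A" "\<eta> \<in> log_ders_on Y Z A"
  shows "(\<lambda>w. \<theta> w - \<eta> w) \<in> log_ders_on Y Z A"
  using log_ders_on_add[OF assms(1) log_ders_on_smult[OF assms(2), of "- 1"]]
  by (simp add: poly_in_uminus)

section \<open>Bases of modules of derivations\<close>

definition is_basis ::
  "'w set \<Rightarrow> ('w \<Rightarrow> ('w, 'k::comm_ring_1) mpoly) set \<Rightarrow> ('w \<Rightarrow> ('w, 'k) mpoly) set \<Rightarrow> bool" where
  "is_basis Y M B \<longleftrightarrow> finite B \<and> B \<subseteq> M \<and>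
     (\<forall>\<theta>\<in>M. \<exists>!c. (\<forall>b\<in>B. poly_in Y (c b)) \<and> (\<forall>b. b \<notin> B \<longrightarrow> c b = 0) \<and>
         \<theta> = (\<lambda>w. \<Sum>b\<in>B. c b * b w))"

definition free_module :: "'w set \<Rightarrow> ('w \<Rightarrow> ('w, 'k::comm_ring_1) mpoly) set \<Rightarrow> bool" where
  "free_module Y M \<longleftrightarrow> (\<exists>B. is_basis Y M B)"

lemma free_arr_iff_free_module: "free_arr Y A \<longleftrightarrow> free_module Y (log_ders_on Y Y A)"
  unfolding free_arr_def free_module_def is_basis_def log_ders_eq_log_ders_on ..

lemma is_basis_spans:
  assumes "is_basis Y M B" "\<theta> \<in> M"
  obtains c where "\<forall>b\<in>B. poly_in Y (c b)" "\<theta> = (\<lambda>w. \<Sum>b\<in>B. c b * b w)"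
  using assms unfolding is_basis_def by blast

lemma is_basis_indep:
  assumes basis: "is_basis Y M B" and zero: "(\<lambda>w. 0) \<in> M"
    and c: "\<forall>b\<in>B. poly_in Y (c b)" "\<forall>w. (\<Sum>b\<in>B. c b * b w) = 0"
  shows "\<forall>b\<in>B. c b = 0"
proof -
  define c' where "c' b = (if b \<in> B then c b else 0)" for b
  define P where "P c \<longleftrightarrow> (\<forall>b\<in>B. poly_in Y (c b)) \<and> (\<forall>b. b \<notin> B \<longrightarrow> c b = 0) \<and>
    (\<lambda>w. 0) = (\<lambda>w. \<Sum>b\<in>B. c b * b w)" for c
  have "\<exists>!c. P c"
    using basis zero unfolding is_basis_def P_def by blast
  moreover have "P c'" "P (\<lambda>_. 0)"
    using c by (auto simp: P_def c'_def)
  ultimately have "c' = (\<lambda>_. 0)"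
    by (metis the1_equality)
  then show ?thesis by (metis c'_def)
qed

lemma indep_imp_inj_on:
  fixes g :: "'i \<Rightarrow> 'w \<Rightarrow> ('w, 'k::comm_ring_1) mpoly"
  assumes fin: "finite I"
    and indep: "\<And>a. \<forall>i\<in>I. poly_in Y (a i) \<Longrightarrow> \<forall>w. (\<Sum>i\<in>I. a i * g i w) = 0 \<Longrightarrow> \<forall>i\<in>I. a i = 0"
  shows "inj_on g I"
proof (rule inj_onI, rule ccontr)
  fix i j assume ij: "i \<in> I" "j \<in> I" "g i = g j" "i \<noteq> j"
  define a :: "'i \<Rightarrow> ('w, 'k) mpoly" where "a x = (if x = i then 1 else if x = j then -1 else 0)" for x
  have "(\<Sum>x\<in>I. a x * g x w) = (\<Sum>x\<in>{i, j}. a x * g x w)" for w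
    using ij fin by (intro sum.mono_neutral_right) (auto simp: a_def)
  then have "\<forall>w. (\<Sum>x\<in>I. a x * g x w) = 0"
    using ij by (simp add: a_def)
  moreover have "\<forall>x\<in>I. poly_in Y (a x)"
    by (auto simp: a_def intro: poly_in_uminus)
  ultimately have "a i = 0" using indep ij by blast
  then show False by (simp add: a_def)
qed

lemma indep_image_coeffs_unique:
  fixes g :: "'i \<Rightarrow> 'w \<Rightarrow> ('w, 'k::comm_ring_1) mpoly"
  assumes inj: "inj_on g I"
    and indep: "\<And>a. \<forall>i\<in>I. poly_in Y (a i) \<Longrightarrow> \<forall>w. (\<Sum>i\<in>I. a i * g i w) = 0 \<Longrightarrow> \<forall>i\<in>I. a i = 0"
    and c: "\<forall>b\<in>g ` I. poly_in Y (c b)" "\<forall>b. b \<notin> g ` I \<longrightarrow> c b = 0"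
    and c': "\<forall>b\<in>g ` I. poly_in Y (c' b)" "\<forall>b. b \<notin> g ` I \<longrightarrow> c' b = 0"
    and eq: "(\<lambda>w. \<Sum>b\<in>g ` I. c b * b w) = (\<lambda>w. \<Sum>b\<in>g ` I. c' b * b w)"
  shows "c = c'"
proof
  fix b
  have "(\<Sum>i\<in>I. c (g i) * g i w) = (\<Sum>i\<in>I. c' (g i) * g i w)" for w
    using fun_cong[OF eq, of w] inj by (simp add: sum.reindex)
  then have "\<forall>w. (\<Sum>i\<in>I. (c (g i) - c' (g i)) * g i w) = 0"
    by (simp add: left_diff_distrib sum_subtractf)
  moreover have "\<forall>i\<in>I. poly_in Y (c (g i) - c' (g i))"
    using c c' by (auto intro: poly_in_diff)
  ultimately have "\<forall>i\<in>I. c (g i) - c' (g i) = 0"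
    by (rule indep[rotated])
  then show "c b = c' b"
    using c c' by (cases "b \<in> g ` I") auto
qed

lemma is_basis_image:
  fixes g :: "'i \<Rightarrow> 'w \<Rightarrow> ('w, 'k::comm_ring_1) mpoly"
  assumes fin: "finite I" and gM: "g ` I \<subseteq> M"
    and span: "\<And>\<theta>. \<theta> \<in> M \<Longrightarrow> \<exists>a. (\<forall>i\<in>I. poly_in Y (a i)) \<and> \<theta> = (\<lambda>w. \<Sum>i\<in>I. a i * g i w)"
    and indep: "\<And>a. \<forall>i\<in>I. poly_in Y (a i) \<Longrightarrow> \<forall>w. (\<Sum>i\<in>I. a i * g i w) = 0 \<Longrightarrow> \<forall>i\<in>I. a i = 0"
  shows "is_basis Y M (g ` I)"
  unfolding is_basis_def
proof (intro conjI ballI)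
  have inj: "inj_on g I"
    using fin indep by (rule indep_imp_inj_on)
  show "finite (g ` I)" "g ` I \<subseteq> M"
    using fin gM by simp_all
  fix \<theta> assume "\<theta> \<in> M"
  then obtain a where a: "\<forall>i\<in>I. poly_in Y (a i)" "\<theta> = (\<lambda>w. \<Sum>i\<in>I. a i * g i w)"
    using span by blast
  define c where "c b = (if b \<in> g ` I then a (the_inv_into I g b) else 0)" for b
  have cg: "c (g i) = a i" if "i \<in> I" for i
    using that inj by (simp add: c_def the_inv_into_f_f)
  have "\<theta> = (\<lambda>w. \<Sum>b\<in>g ` I. c b * b w)"
    using inj by (simp add: a(2) sum.reindex cg)
  moreover have "\<forall>b\<in>g ` I. poly_in Y (c b)" "\<forall>b. b \<notin> g ` I \<longrightarrow> c b = 0"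
    using a(1) cg by (auto simp: c_def)
  ultimately show "\<exists>!c. (\<forall>b\<in>g ` I. poly_in Y (c b)) \<and> (\<forall>b. b \<notin> g ` I \<longrightarrow> c b = 0) \<and>
      \<theta> = (\<lambda>w. \<Sum>b\<in>g ` I. c b * b w)"
    using indep_image_coeffs_unique[OF inj indep] by (intro ex1I[of _ c]) auto
qed

section \<open>Gluing two arrangements along \<open>x\<^sub>0\<close>\<close>

text \<open>Junk unless \<open>x\<^sub>0\<close> divides \<open>\<theta>(x\<^sub>0)\<close>, which holds on \<open>D(A)\<close> when \<open>x\<^sub>0 = 0\<close> is in \<open>A\<close>.\<close>

definition x0_coeff :: "('w option \<Rightarrow> ('w option, 'k::comm_ring_1) mpoly) \<Rightarrow> ('w option, 'k) mpoly" where
  "x0_coeff \<theta> = (THE g. \<theta> None = var None * g)"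

lemma x0_coeff_eq: "\<theta> None = var None * g \<Longrightarrow> x0_coeff \<theta> = g"
  unfolding x0_coeff_def by (rule the_equality) (auto dest: var_mult_cancel)

lemma log_ders_on_x0_coeff:
  assumes "\<theta> \<in> log_ders_on W Z A" "x0_form \<in> A" "finite W" "None \<in> W"
  shows "\<theta> None = var None * x0_coeff \<theta>" "poly_in W (x0_coeff \<theta>)"
proof -
  obtain q where "poly_in W q" "\<theta> None = var None * q"
    using assms by (auto simp: log_ders_on_def divides_in_def der_apply_x0_form lin_poly_x0_form)
  then show "\<theta> None = var None * x0_coeff \<theta>" "poly_in W (x0_coeff \<theta>)"
    using x0_coeff_eq by metis+
qed

lemma x0_coeff_sum:
  assumes "\<And>i. i \<in> I \<Longrightarrow> g i None = var None * x0_coeff (g i)"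
  shows "x0_coeff (\<lambda>w. \<Sum>i\<in>I. c i * g i w) = (\<Sum>i\<in>I. c i * x0_coeff (g i))"
  by (rule x0_coeff_eq) (simp add: assms sum_distrib_left mult.left_commute)

definition supported_on :: "'w set \<Rightarrow> 'w set \<Rightarrow> ('w \<Rightarrow> 'k::zero) set \<Rightarrow> bool" where
  "supported_on W Z A \<longleftrightarrow> (\<forall>a\<in>A. \<forall>w\<in>W. w \<notin> Z \<longrightarrow> a w = 0)"

definition euler :: "'w set \<Rightarrow> 'w \<Rightarrow> ('w, 'k::comm_ring_1) mpoly" where
  "euler Z w = (if w \<in> Z then var w else 0)"

lemma euler_mem_log_ders_on:
  assumes "finite W" "Z \<subseteq> W" "supported_on W Z A"
  shows "euler Z \<in> log_ders_on W Z A"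
  unfolding log_ders_on_def
proof (intro CollectI conjI allI impI ballI)
  show "is_der W (euler Z)"
    using assms by (auto simp: is_der_def euler_def intro: poly_in_var)
  show "w \<notin> Z \<Longrightarrow> euler Z w = 0" for w
    by (simp add: euler_def)
  fix a assume "a \<in> A"
  then have "der_apply W (euler Z) a = lin_poly W a"
    using assms unfolding supported_on_def
    by (simp add: der_apply_eq_sum[of W Z] lin_poly_eq_sum[of W Z] euler_def)
  then show "divides_in W (lin_poly W a) (der_apply W (euler Z) a)"
    unfolding divides_in_def by (intro exI[of _ 1]) simp
qed

definition restrict_der :: "'w set \<Rightarrow> ('w \<Rightarrow> ('w, 'k::comm_ring_1) mpoly) \<Rightarrow> 'w \<Rightarrow> ('w, 'k) mpoly" where
  "restrict_der Z \<theta> w = (if w \<in> Z then \<theta> w else 0)"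

lemma der_apply_restrict_der:
  assumes "\<And>w. w \<in> W \<Longrightarrow> w \<notin> Z \<Longrightarrow> a w = 0"
  shows "der_apply W (restrict_der Z \<theta>) a = der_apply W \<theta> a"
  unfolding der_apply_def restrict_der_def using assms by (intro sum.cong) auto

lemma log_ders_on_restrict_der:
  assumes "\<theta> \<in> log_ders_on W Z A" "supported_on W Z' A'" "A' \<subseteq> A"
  shows "restrict_der Z' \<theta> \<in> log_ders_on W Z' A'"
  using assms unfolding log_ders_on_def supported_on_def
  by (auto simp: is_der_def restrict_der_def der_apply_restrict_der)

definition glue :: "'w set \<Rightarrow> ('w \<Rightarrow> ('w, 'k::comm_ring_1) mpoly) \<Rightarrow> ('w \<Rightarrow> ('w, 'k) mpoly) \<Rightarrow> 'w \<Rightarrow> ('w, 'k) mpoly" where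
  "glue Z \<theta> \<eta> w = (if w \<in> Z then \<eta> w else \<theta> w)"

lemma log_ders_on_glue:
  assumes \<theta>: "\<theta> \<in> log_ders_on W Z1 A1" and \<eta>: "\<eta> \<in> log_ders_on W Z2 A2"
    and supp: "supported_on W Z1 A1" "supported_on W Z2 A2"
    and Z12: "Z1 \<inter> Z2 \<subseteq> {None}" and agree: "\<theta> None = \<eta> None"
  shows "glue Z2 \<theta> \<eta> \<in> log_ders_on W (Z1 \<union> Z2) (A1 \<union> A2)"
proof -
  have "restrict_der Z1 (glue Z2 \<theta> \<eta>) = restrict_der Z1 \<theta>"
    using Z12 agree by (auto simp: restrict_der_def glue_def fun_eq_iff)
  also have "\<dots> = \<theta>"
    using \<theta> by (auto simp: restrict_der_def log_ders_on_def fun_eq_iff)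
  finally have 1: "der_apply W (glue Z2 \<theta> \<eta>) a = der_apply W \<theta> a" if "a \<in> A1" for a
    using supp(1) that der_apply_restrict_der[of W Z1 a] unfolding supported_on_def by metis
  have "restrict_der Z2 (glue Z2 \<theta> \<eta>) = \<eta>"
    using \<eta> by (auto simp: restrict_der_def glue_def log_ders_on_def fun_eq_iff)
  then have 2: "der_apply W (glue Z2 \<theta> \<eta>) a = der_apply W \<eta> a" if "a \<in> A2" for a
    using supp(2) that der_apply_restrict_der[of W Z2 a] unfolding supported_on_def by metis
  show ?thesis
    using \<theta> \<eta> 1 2 unfolding log_ders_on_def by (auto simp: is_der_def glue_def)
qed

lemma is_basis_x0_form:
  assumes "finite W" "None \<in> W"
  shows "is_basis W (log_ders_on W {None} {x0_form :: 'w option \<Rightarrow> 'k::comm_ring_1}) {euler {None}}"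
proof -
  let ?D = "log_ders_on W {None} {x0_form :: 'w option \<Rightarrow> 'k}"
  have "supported_on W {None} {x0_form :: 'w option \<Rightarrow> 'k}"
    by (simp add: supported_on_def x0_form_def)
  then have "euler {None} \<in> ?D"
    using assms by (intro euler_mem_log_ders_on) auto
  have "is_basis W ?D ((\<lambda>_. euler {None}) ` {()})"
  proof (rule is_basis_image)
    show "finite {()}" "(\<lambda>_. euler {None}) ` {()} \<subseteq> ?D"
      using \<open>euler {None} \<in> ?D\<close> by simp_all
  next
    fix \<theta> assume \<theta>: "\<theta> \<in> ?D"
    have "\<theta> None = var None * x0_coeff \<theta>" "poly_in W (x0_coeff \<theta>)"
      using log_ders_on_x0_coeff[OF \<theta> _ assms] by auto
    moreover have "\<theta> w = 0" if "w \<noteq> None" for w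
      using \<theta> that by (simp add: log_ders_on_def)
    ultimately show "\<exists>a. (\<forall>i\<in>{()}. poly_in W (a i)) \<and> \<theta> = (\<lambda>w. \<Sum>i\<in>{()}. a i * euler {None} w)"
      by (intro exI[of _ "\<lambda>_. x0_coeff \<theta>"]) (auto simp: euler_def fun_eq_iff mult.commute)
  next
    fix a :: "unit \<Rightarrow> ('w option, 'k) mpoly"
    assume "\<forall>w. (\<Sum>i\<in>{()}. a i * euler {None} w) = 0"
    then have "a () * euler {None} None = 0"
      by simp
    then have "var None * a () = var None * 0"
      by (simp add: euler_def mult.commute)
    then show "\<forall>i\<in>{()}. a i = 0"
      by (simp add: var_mult_cancel)
  qed
  then show ?thesis by simp
qed

text \<open>If \<open>A\<^sub>1\<close> and \<open>A\<^sub>2\<close> live on coordinates meeting only in \<open>x\<^sub>0\<close>, a derivation in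
  \<open>D(A\<^sub>1 \<union> A\<^sub>2)\<close> is a pair \<open>(\<theta>\<^sub>1, \<theta>\<^sub>2) \<in> D(A\<^sub>1) \<times> D(A\<^sub>2)\<close> with the same \<open>x\<^sub>0\<close>-coefficient.
  Given bases \<open>C\<close> of \<open>D(A\<^sub>1)\<close> and \<open>B\<close> of \<open>D(A\<^sub>2)\<close> and any \<open>b\<^sub>1 \<in> B\<close>, such pairs are
  spanned freely by the following lifts of \<open>C\<close> and \<open>B - {b\<^sub>1}\<close>, where the Euler derivation
  of \<open>A\<^sub>1\<close> is used to match \<open>x\<^sub>0\<close>-coefficients.\<close>

locale glued_bases =
  fixes W Z1 Z2 :: "'w option set" and A1 A2 :: "('w option \<Rightarrow> 'k::comm_ring_1) set"
    and C B :: "('w option \<Rightarrow> ('w option, 'k) mpoly) set" and b1 :: "'w option \<Rightarrow> ('w option, 'k) mpoly"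
  assumes finite_W: "finite W" and Z1_W: "Z1 \<subseteq> W" and Z2_W: "Z2 \<subseteq> W"
    and None_Z1: "None \<in> Z1" and None_Z2: "None \<in> Z2" and Z1_Z2: "Z1 \<inter> Z2 \<subseteq> {None}"
    and x0_A1: "x0_form \<in> A1" and x0_A2: "x0_form \<in> A2"
    and supp1: "supported_on W Z1 A1" and supp2: "supported_on W Z2 A2"
    and basis1: "is_basis W (log_ders_on W Z1 A1) C"
    and basis2: "is_basis W (log_ders_on W Z2 A2) B"
    and b1_B: "b1 \<in> B"
begin

abbreviation "D1 \<equiv> log_ders_on W Z1 A1"
abbreviation "D2 \<equiv> log_ders_on W Z2 A2"
abbreviation "D \<equiv> log_ders_on W (Z1 \<union> Z2) (A1 \<union> A2)"

lemma x0_coeff_mem: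
  assumes "\<theta> \<in> D1 \<or> \<theta> \<in> D2 \<or> \<theta> \<in> D"
  shows "\<theta> None = var None * x0_coeff \<theta>" "poly_in W (x0_coeff \<theta>)"
  using assms log_ders_on_x0_coeff[of \<theta> W, OF _ _ finite_W] None_Z1 Z1_W x0_A1 x0_A2 by auto

lemma zero_outside:
  shows "\<theta> \<in> D1 \<Longrightarrow> w \<notin> Z1 \<Longrightarrow> \<theta> w = 0" "\<theta> \<in> D2 \<Longrightarrow> w \<notin> Z2 \<Longrightarrow> \<theta> w = 0"
    and "\<theta> \<in> D \<Longrightarrow> w \<notin> Z1 \<union> Z2 \<Longrightarrow> \<theta> w = 0"
  by (simp_all add: log_ders_on_def)

lemma euler_mem: "euler Z1 \<in> D1" "euler Z2 \<in> D2"
  using finite_W Z1_W Z2_W supp1 supp2 by (simp_all add: euler_mem_log_ders_on)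

definition glue_left :: "('w option \<Rightarrow> ('w option, 'k) mpoly) \<Rightarrow> 'w option \<Rightarrow> ('w option, 'k) mpoly" where
  "glue_left c = glue Z2 (\<lambda>w. c w + x0_coeff c * ((x0_coeff b1 - 1) * euler Z1 w)) (\<lambda>w. x0_coeff c * b1 w)"

definition glue_right :: "('w option \<Rightarrow> ('w option, 'k) mpoly) \<Rightarrow> 'w option \<Rightarrow> ('w option, 'k) mpoly" where
  "glue_right b = glue Z2 (\<lambda>w. x0_coeff b * euler Z1 w) b"

definition glued_index :: "(('w option \<Rightarrow> ('w option, 'k) mpoly) + ('w option \<Rightarrow> ('w option, 'k) mpoly)) set" where
  "glued_index = Inl ` C \<union> Inr ` (B - {b1})"

definition glued where "glued = case_sum glue_left glue_right"

lemma glued_mem: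
  assumes "i \<in> glued_index"
  shows "glued i \<in> D"
proof (cases i)
  case (Inl c)
  then have c: "c \<in> D1" using assms basis1 by (auto simp: glued_index_def is_basis_def)
  have b1: "b1 \<in> D2" using basis2 b1_B by (auto simp: is_basis_def)
  have "(\<lambda>w. c w + x0_coeff c * ((x0_coeff b1 - 1) * euler Z1 w)) \<in> D1"
    using c b1 euler_mem x0_coeff_mem
    by (intro log_ders_on_add log_ders_on_smult poly_in_mult poly_in_diff) auto
  moreover have "(\<lambda>w. x0_coeff c * b1 w) \<in> D2"
    using c b1 x0_coeff_mem by (intro log_ders_on_smult) auto
  moreover have "c None + x0_coeff c * ((x0_coeff b1 - 1) * euler Z1 None) = x0_coeff c * b1 None"
    using c b1 x0_coeff_mem None_Z1 by (simp add: euler_def algebra_simps)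
  ultimately show ?thesis
    using Inl log_ders_on_glue supp1 supp2 Z1_Z2 by (simp add: glued_def glue_left_def)
next
  case (Inr b)
  then have b: "b \<in> D2" using assms basis2 by (auto simp: glued_index_def is_basis_def)
  have "(\<lambda>w. x0_coeff b * euler Z1 w) \<in> D1"
    using b euler_mem x0_coeff_mem by (intro log_ders_on_smult) auto
  moreover have "x0_coeff b * euler Z1 None = b None"
    using b x0_coeff_mem None_Z1 by (simp add: euler_def mult.commute)
  ultimately show ?thesis
    using Inr log_ders_on_glue b supp1 supp2 Z1_Z2 by (simp add: glued_def glue_right_def)
qed

lemma glued_combination:
  fixes a :: "_ \<Rightarrow> ('w option, 'k) mpoly"
  defines "s \<equiv> \<Sum>c\<in>C. a (Inl c) * x0_coeff c"
  shows "(\<Sum>i\<in>glued_index. a i * glued i w) =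
    (if w \<in> Z2 then s * b1 w + (\<Sum>b\<in>B - {b1}. a (Inr b) * b w)
     else (\<Sum>c\<in>C. a (Inl c) * c w) +
       (s * (x0_coeff b1 - 1) + (\<Sum>b\<in>B - {b1}. a (Inr b) * x0_coeff b)) * euler Z1 w)"
proof -
  have "finite C" "finite B" using basis1 basis2 by (simp_all add: is_basis_def)
  then have "(\<Sum>i\<in>glued_index. a i * glued i w) =
      (\<Sum>c\<in>C. a (Inl c) * glue_left c w) + (\<Sum>b\<in>B - {b1}. a (Inr b) * glue_right b w)"
    unfolding glued_index_def by (subst sum.union_disjoint) (auto simp: sum.reindex glued_def)
  moreover have "(\<Sum>c\<in>C. a (Inl c) * (x c + x0_coeff c * r)) = (\<Sum>c\<in>C. a (Inl c) * x c) + s * r"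
    for x r by (simp add: s_def distrib_left sum.distrib sum_distrib_right mult.assoc)
  ultimately show ?thesis
    by (simp add: glue_left_def glue_right_def glue_def s_def sum_distrib_right mult.assoc
        distrib_right sum.distrib add.assoc)
qed

lemma glued_combination_eq:
  assumes \<theta>: "\<theta> \<in> D"
    and \<beta>: "restrict_der Z2 \<theta> = (\<lambda>w. \<Sum>b\<in>B. \<beta> b * b w)"
    and \<alpha>: "(\<lambda>w. restrict_der Z1 \<theta> w - (x0_coeff \<theta> - \<beta> b1) * euler Z1 w) = (\<lambda>w. \<Sum>c\<in>C. \<alpha> c * c w)"
  shows "\<theta> = (\<lambda>w. \<Sum>i\<in>glued_index. case_sum \<alpha> \<beta> i * glued i w)"
proof -
  let ?x = "\<lambda>w. restrict_der Z1 \<theta> w - (x0_coeff \<theta> - \<beta> b1) * euler Z1 w"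
  have B: "finite B" "B \<subseteq> D2" and C: "C \<subseteq> D1"
    using basis1 basis2 by (simp_all add: is_basis_def)
  have "x0_coeff ?x = \<beta> b1"
    using x0_coeff_mem(1)[of \<theta>] \<theta> None_Z1
    by (intro x0_coeff_eq) (simp add: restrict_der_def euler_def algebra_simps)
  moreover have "x0_coeff ?x = (\<Sum>c\<in>C. \<alpha> c * x0_coeff c)"
    unfolding \<alpha> using C x0_coeff_mem by (intro x0_coeff_sum) auto
  ultimately have s: "(\<Sum>c\<in>C. \<alpha> c * x0_coeff c) = \<beta> b1" by simp
  have "x0_coeff \<theta> = x0_coeff (restrict_der Z2 \<theta>)"
    using x0_coeff_mem(1)[of \<theta>] \<theta> None_Z2 by (intro x0_coeff_eq[symmetric]) (simp add: restrict_der_def)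
  also have "\<dots> = (\<Sum>b\<in>B. \<beta> b * x0_coeff b)"
    unfolding \<beta> using B x0_coeff_mem by (intro x0_coeff_sum) auto
  finally have x0_\<theta>: "x0_coeff \<theta> = \<beta> b1 * x0_coeff b1 + (\<Sum>b\<in>B - {b1}. \<beta> b * x0_coeff b)"
    using B b1_B by (simp add: sum.remove)
  show ?thesis
  proof
    fix w
    show "\<theta> w = (\<Sum>i\<in>glued_index. case_sum \<alpha> \<beta> i * glued i w)"
    proof (cases "w \<in> Z2")
      case True
      then have "\<theta> w = \<beta> b1 * b1 w + (\<Sum>b\<in>B - {b1}. \<beta> b * b w)"
        using fun_cong[OF \<beta>, of w] B b1_B by (simp add: restrict_der_def sum.remove)
      then show ?thesis
        using True by (simp add: glued_combination s)
    next
      case False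
      have "(\<Sum>i\<in>glued_index. case_sum \<alpha> \<beta> i * glued i w) = (\<Sum>c\<in>C. \<alpha> c * c w) +
          (\<beta> b1 * (x0_coeff b1 - 1) + (\<Sum>b\<in>B - {b1}. \<beta> b * x0_coeff b)) * euler Z1 w"
        using False by (simp add: glued_combination s)
      also have "\<dots> = ?x w + (x0_coeff \<theta> - \<beta> b1) * euler Z1 w"
        using fun_cong[OF \<alpha>, of w] by (simp add: x0_\<theta> algebra_simps)
      also have "\<dots> = \<theta> w"
        using False zero_outside(3)[OF \<theta>] by (auto simp: restrict_der_def)
      finally show ?thesis ..
    qed
  qed
qed

lemma glued_spans:
  assumes \<theta>: "\<theta> \<in> D"
  shows "\<exists>a. (\<forall>i\<in>glued_index. poly_in W (a i)) \<and> \<theta> = (\<lambda>w. \<Sum>i\<in>glued_index. a i * glued i w)"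
proof -
  have "restrict_der Z2 \<theta> \<in> D2"
    using \<theta> supp2 by (rule log_ders_on_restrict_der) simp
  then obtain \<beta> where \<beta>: "\<forall>b\<in>B. poly_in W (\<beta> b)" "restrict_der Z2 \<theta> = (\<lambda>w. \<Sum>b\<in>B. \<beta> b * b w)"
    by (rule is_basis_spans[OF basis2])
  have "restrict_der Z1 \<theta> \<in> D1"
    using \<theta> supp1 by (rule log_ders_on_restrict_der) simp
  txt \<open>Correct the \<open>Z\<^sub>1\<close>-part by a multiple of the Euler derivation to make its
    \<open>x\<^sub>0\<close>-coefficient \<open>\<beta> b\<^sub>1\<close>.\<close>
  then have "(\<lambda>w. restrict_der Z1 \<theta> w - (x0_coeff \<theta> - \<beta> b1) * euler Z1 w) \<in> D1"
    using \<theta> \<beta>(1) b1_B euler_mem x0_coeff_mem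
    by (intro log_ders_on_diff log_ders_on_smult poly_in_diff) auto
  then obtain \<alpha> where \<alpha>: "\<forall>c\<in>C. poly_in W (\<alpha> c)"
    "(\<lambda>w. restrict_der Z1 \<theta> w - (x0_coeff \<theta> - \<beta> b1) * euler Z1 w) = (\<lambda>w. \<Sum>c\<in>C. \<alpha> c * c w)"
    by (rule is_basis_spans[OF basis1])
  have "\<forall>i\<in>glued_index. poly_in W (case_sum \<alpha> \<beta> i)"
    using \<alpha>(1) \<beta>(1) by (auto simp: glued_index_def)
  with glued_combination_eq[OF \<theta> \<beta>(2) \<alpha>(2)] show ?thesis by blast
qed

lemma glued_indep_on_Z2:
  assumes a: "\<forall>i\<in>glued_index. poly_in W (a i)"
    and a0: "\<forall>w. (\<Sum>i\<in>glued_index. a i * glued i w) = 0"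
  shows "(\<Sum>c\<in>C. a (Inl c) * x0_coeff c) = 0" "\<forall>b\<in>B - {b1}. a (Inr b) = 0"
proof -
  define s where "s = (\<Sum>c\<in>C. a (Inl c) * x0_coeff c)"
  have B: "finite B" "B \<subseteq> D2" and C: "C \<subseteq> D1"
    using basis1 basis2 by (simp_all add: is_basis_def)
  define \<beta> where "\<beta> b = (if b = b1 then s else a (Inr b))" for b
  have "\<forall>b\<in>B. \<beta> b = 0"
  proof (rule is_basis_indep[OF basis2 log_ders_on_zero])
    have "poly_in W s"
      unfolding s_def using a C x0_coeff_mem
      by (intro poly_in_sum poly_in_mult) (auto simp: glued_index_def)
    then show "\<forall>b\<in>B. poly_in W (\<beta> b)"
      using a by (auto simp: \<beta>_def glued_index_def)
    show "\<forall>w. (\<Sum>b\<in>B. \<beta> b * b w) = 0"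
    proof
      fix w
      show "(\<Sum>b\<in>B. \<beta> b * b w) = 0"
      proof (cases "w \<in> Z2")
        case True
        then show ?thesis
          using a0[rule_format, of w] B b1_B by (simp add: glued_combination sum.remove \<beta>_def s_def)
      next
        case False
        then have "b w = 0" if "b \<in> B" for b
          using that B(2) zero_outside(2) by blast
        then show ?thesis by (metis (mono_tags) mult_zero_right sum.neutral)
      qed
    qed
  qed
  then show "s = 0" "\<forall>b\<in>B - {b1}. a (Inr b) = 0"
    using b1_B by (auto simp: \<beta>_def) (metis DiffD1 DiffD2 singletonI)
qed

lemma glued_indep:
  assumes a: "\<forall>i\<in>glued_index. poly_in W (a i)"
    and a0: "\<forall>w. (\<Sum>i\<in>glued_index. a i * glued i w) = 0"
  shows "\<forall>i\<in>glued_index. a i = 0"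
proof -
  define s where "s = (\<Sum>c\<in>C. a (Inl c) * x0_coeff c)"
  have s0: "s = 0" and aB: "\<forall>b\<in>B - {b1}. a (Inr b) = 0"
    using glued_indep_on_Z2[OF a a0] by (simp_all add: s_def)
  have C: "C \<subseteq> D1"
    using basis1 by (simp add: is_basis_def)
  have "\<forall>c\<in>C. a (Inl c) = 0"
  proof (rule is_basis_indep[OF basis1 log_ders_on_zero])
    show "\<forall>c\<in>C. poly_in W (a (Inl c))"
      using a by (auto simp: glued_index_def)
    show "\<forall>w. (\<Sum>c\<in>C. a (Inl c) * c w) = 0"
    proof
      fix w
      consider "w \<notin> Z2" | "w = None" | "w \<in> Z2" "w \<notin> Z1"
        using Z1_Z2 by blast
      then show "(\<Sum>c\<in>C. a (Inl c) * c w) = 0"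
      proof cases
        case 1
        then show ?thesis
          using a0[rule_format, of w] by (simp add: glued_combination aB s_def[symmetric] s0)
      next
        case 2
        have "c None = var None * x0_coeff c" if "c \<in> C" for c
          using that C x0_coeff_mem(1) by blast
        then have "(\<Sum>c\<in>C. a (Inl c) * c w) = (\<Sum>c\<in>C. var None * (a (Inl c) * x0_coeff c))"
          using 2 by (intro sum.cong refl) (metis mult.left_commute)
        then show ?thesis by (simp add: s_def[symmetric] sum_distrib_left[symmetric] s0)
      next
        case 3
        then have "c w = 0" if "c \<in> C" for c
          using that C zero_outside(1) by blast
        then show ?thesis by (metis (mono_tags) mult_zero_right sum.neutral)
      qed
    qed
  qed
  then show ?thesis
    using aB by (auto simp: glued_index_def)
qed

lemma is_basis_glued: "is_basis W D (glued ` glued_index)"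
proof (rule is_basis_image)
  show "finite glued_index"
    using basis1 basis2 by (simp add: glued_index_def is_basis_def)
qed (use glued_mem glued_spans glued_indep in auto)

end

lemma free_module_glue:
  fixes A1 A2 :: "('w option \<Rightarrow> 'k::comm_ring_1) set"
  assumes "finite W" "Z1 \<subseteq> W" "Z2 \<subseteq> W" "None \<in> Z1" "None \<in> Z2" "Z1 \<inter> Z2 \<subseteq> {None}"
    and "x0_form \<in> A1" "x0_form \<in> A2" "supported_on W Z1 A1" "supported_on W Z2 A2"
    and "free_module W (log_ders_on W Z1 A1)" "free_module W (log_ders_on W Z2 A2)"
  shows "free_module W (log_ders_on W (Z1 \<union> Z2) (A1 \<union> A2))"
proof -
  obtain C B where C: "is_basis W (log_ders_on W Z1 A1) C" and B: "is_basis W (log_ders_on W Z2 A2) B"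
    using assms(11,12) by (auto simp: free_module_def)
  have "euler Z2 \<in> log_ders_on W Z2 A2"
    using assms by (intro euler_mem_log_ders_on)
  with B obtain c where "\<forall>b\<in>B. poly_in W (c b)" "euler Z2 = (\<lambda>w. \<Sum>b\<in>B. c b * b w)"
    by (rule is_basis_spans)
  moreover have "euler Z2 None \<noteq> (0 :: ('w option, 'k) mpoly)"
    using assms(5) by (simp add: euler_def var_neq_zero)
  ultimately have "B \<noteq> {}" by auto
  then obtain b1 where "b1 \<in> B" by blast
  then interpret glued_bases W Z1 Z2 A1 A2 C B b1
    using assms C B by unfold_locales
  show ?thesis
    using is_basis_glued by (auto simp: free_module_def)
qed

section \<open>Renaming and adding variables\<close>

locale renaming =
  fixes \<rho> :: "'u \<Rightarrow> 'w"
  assumes inj_\<rho>: "inj \<rho>"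
begin

definition rename_mon :: "('u \<Rightarrow>\<^sub>0 nat) \<Rightarrow> 'w \<Rightarrow>\<^sub>0 nat" where
  "rename_mon = push_key \<rho>"

definition rename_poly :: "('u, 'k::comm_ring_1) mpoly \<Rightarrow> ('w, 'k) mpoly" where
  "rename_poly = push_key rename_mon"

lemma inj_rename_mon: "inj rename_mon"
  unfolding rename_mon_def by (rule inj_push_key[OF inj_\<rho>])

lemma rename_mon_add: "rename_mon (a + b) = rename_mon a + rename_mon b"
  unfolding rename_mon_def by (rule push_key_add[OF inj_\<rho>])

lemma lookup_rename_mon [simp]: "Poly_Mapping.lookup (rename_mon m) (\<rho> u) = Poly_Mapping.lookup m u"
  unfolding rename_mon_def using inj_\<rho> by (rule lookup_push_key_image)

lemma lookup_rename_mon_notin: "w \<notin> range \<rho> \<Longrightarrow> Poly_Mapping.lookup (rename_mon m) w = 0"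
  unfolding rename_mon_def using inj_\<rho> by (rule lookup_push_key_notin)

lemma rename_mon_single [simp]: "rename_mon (Poly_Mapping.single u n) = Poly_Mapping.single (\<rho> u) n"
  unfolding rename_mon_def using inj_\<rho> by (rule push_key_single)

lemma keys_rename_mon: "Poly_Mapping.keys (rename_mon m) = \<rho> ` Poly_Mapping.keys m"
  unfolding rename_mon_def using inj_\<rho> by (rule keys_push_key)

lemma rename_poly_zero [simp]: "rename_poly 0 = 0"
  unfolding rename_poly_def by simp

lemma rename_poly_sum: "rename_poly (sum f A) = (\<Sum>a\<in>A. rename_poly (f a))"
  unfolding rename_poly_def by (rule push_key_sum[OF inj_rename_mon])

lemma rename_poly_mult: "rename_poly (p * q) = rename_poly p * rename_poly q"
  unfolding rename_poly_def by (rule push_key_mult[OF inj_rename_mon rename_mon_add])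

lemma rename_poly_single: "rename_poly (Poly_Mapping.single m c) = Poly_Mapping.single (rename_mon m) c"
  unfolding rename_poly_def using inj_rename_mon by (rule push_key_single)

lemma rename_poly_const [simp]: "rename_poly (const_poly c) = const_poly c"
  unfolding const_poly_def rename_poly_single by (simp add: rename_mon_def inj_\<rho>)

lemma lookup_rename_poly [simp]:
  "Poly_Mapping.lookup (rename_poly p) (rename_mon m) = Poly_Mapping.lookup p m"
  unfolding rename_poly_def using inj_rename_mon by (rule lookup_push_key_image)

lemma lookup_rename_poly_notin:
  "n \<notin> range rename_mon \<Longrightarrow> Poly_Mapping.lookup (rename_poly p) n = 0"
  unfolding rename_poly_def using inj_rename_mon by (rule lookup_push_key_notin)

lemma keys_rename_poly: "Poly_Mapping.keys (rename_poly p) = rename_mon ` Poly_Mapping.keys p"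
  unfolding rename_poly_def using inj_rename_mon by (rule keys_push_key)

lemma poly_in_rename_poly: "poly_in Y p \<Longrightarrow> poly_in (\<rho> ` Y) (rename_poly p)"
  unfolding poly_in_def keys_rename_poly by (auto simp: keys_rename_mon)

text \<open>Every monomial in the \<open>w\<close>-variables factors uniquely as an outer monomial, free of
  the renamed variables, times a renamed monomial.\<close>

definition inner_part :: "('w \<Rightarrow>\<^sub>0 nat) \<Rightarrow> 'u \<Rightarrow>\<^sub>0 nat" where
  "inner_part n = Poly_Mapping.map_key \<rho> n"

definition outer_part :: "('w \<Rightarrow>\<^sub>0 nat) \<Rightarrow> 'w \<Rightarrow>\<^sub>0 nat" where
  "outer_part n = n - rename_mon (inner_part n)"

definition outer_monomials :: "('w \<Rightarrow>\<^sub>0 nat) set" where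
  "outer_monomials = {\<mu>. Poly_Mapping.keys \<mu> \<inter> range \<rho> = {}}"

lemma lookup_inner_part [simp]: "Poly_Mapping.lookup (inner_part n) u = Poly_Mapping.lookup n (\<rho> u)"
  unfolding inner_part_def using inj_\<rho> by (rule lookup_map_key)

lemma lookup_outer_part:
  "Poly_Mapping.lookup (outer_part n) w = (if w \<in> range \<rho> then 0 else Poly_Mapping.lookup n w)"
  by (auto simp: outer_part_def lookup_minus lookup_rename_mon_notin)

lemma outer_inner_decomp: "n = outer_part n + rename_mon (inner_part n)"
  by (rule poly_mapping_eqI) (auto simp: lookup_add lookup_outer_part lookup_rename_mon_notin)

lemma outer_part_mem: "outer_part n \<in> outer_monomials"
  by (auto simp: outer_monomials_def in_keys_iff lookup_outer_part)

lemma keys_outer_part: "Poly_Mapping.keys (outer_part n) \<subseteq> Poly_Mapping.keys n"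
  by (auto simp: in_keys_iff lookup_outer_part split: if_splits)

lemma outer_part_add: "outer_part (a + b) = outer_part a + outer_part b"
  by (rule poly_mapping_eqI) (simp add: lookup_outer_part lookup_add)

lemma inner_part_add: "inner_part (a + b) = inner_part a + inner_part b"
  by (rule poly_mapping_eqI) (simp add: lookup_add)

lemma outer_part_rename_mon [simp]: "outer_part (rename_mon m) = 0"
  by (rule poly_mapping_eqI) (auto simp: lookup_outer_part lookup_rename_mon_notin)

lemma inner_part_rename_mon [simp]: "inner_part (rename_mon m) = m"
  by (rule poly_mapping_eqI) simp

lemma outer_part_outer_monomial: "\<mu> \<in> outer_monomials \<Longrightarrow> outer_part \<mu> = \<mu>"
  unfolding outer_monomials_def by (intro poly_mapping_eqI) (auto simp: lookup_outer_part in_keys_iff)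

lemma inner_part_outer_monomial: "\<mu> \<in> outer_monomials \<Longrightarrow> inner_part \<mu> = 0"
  unfolding outer_monomials_def by (intro poly_mapping_eqI) (auto simp: in_keys_iff)

lemma lookup_outer_monomial_mult:
  fixes L :: "('u, 'k::comm_ring_1) mpoly"
  assumes \<mu>: "\<mu> \<in> outer_monomials"
  shows "Poly_Mapping.lookup (Poly_Mapping.single \<mu> 1 * rename_poly L) n =
    (if outer_part n = \<mu> then Poly_Mapping.lookup L (inner_part n) else 0)"
proof (cases "\<exists>x. n = \<mu> + x")
  case True
  then obtain x where x: "n = \<mu> + x" by blast
  show ?thesis
  proof (cases "x \<in> range rename_mon")
    case True
    then show ?thesis
      using x \<mu> by (auto simp: lookup_single_mult outer_part_add inner_part_add
          outer_part_outer_monomial inner_part_outer_monomial)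
  next
    case False
    have "outer_part n \<noteq> \<mu>"
    proof
      assume "outer_part n = \<mu>"
      then have "x = rename_mon (inner_part x)"
        using x outer_inner_decomp[of x] by (simp add: outer_part_add outer_part_outer_monomial[OF \<mu>])
      with False show False by (metis rangeI)
    qed
    then show ?thesis
      using x False by (simp add: lookup_single_mult lookup_rename_poly_notin)
  qed
next
  case False
  then have "outer_part n \<noteq> \<mu>"
    using outer_inner_decomp[of n] by metis
  with False show ?thesis
    by (simp add: lookup_single_mult_eq_0)
qed

definition outer_coeff :: "('w \<Rightarrow>\<^sub>0 nat) \<Rightarrow> ('w, 'k::comm_ring_1) mpoly \<Rightarrow> ('u, 'k) mpoly" where
  "outer_coeff \<mu> p = Poly_Mapping.map_key (\<lambda>m. \<mu> + rename_mon m) p"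

lemma inj_shift_rename_mon: "inj (\<lambda>m. \<mu> + rename_mon m)"
  using inj_rename_mon by (auto intro!: injI dest: injD)

lemma lookup_outer_coeff:
  "Poly_Mapping.lookup (outer_coeff \<mu> p) m = Poly_Mapping.lookup p (\<mu> + rename_mon m)"
  unfolding outer_coeff_def using inj_shift_rename_mon by (rule lookup_map_key)

lemma outer_coeff_add: "outer_coeff \<mu> (p + q) = outer_coeff \<mu> p + outer_coeff \<mu> q"
  by (rule poly_mapping_eqI) (simp add: lookup_outer_coeff lookup_add)

lemma outer_coeff_zero [simp]: "outer_coeff \<mu> 0 = 0"
  by (rule poly_mapping_eqI) (simp add: lookup_outer_coeff)

lemma outer_coeff_sum: "outer_coeff \<mu> (sum f A) = (\<Sum>a\<in>A. outer_coeff \<mu> (f a))"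
  by (induction A rule: infinite_finite_induct) (simp_all add: outer_coeff_add)

lemma outer_coeff_single_mult:
  assumes \<mu>: "\<mu> \<in> outer_monomials"
  shows "outer_coeff \<mu> (Poly_Mapping.single (rename_mon a) c * q) = Poly_Mapping.single a c * outer_coeff \<mu> q"
proof (rule poly_mapping_eqI)
  fix m
  show "Poly_Mapping.lookup (outer_coeff \<mu> (Poly_Mapping.single (rename_mon a) c * q)) m =
      Poly_Mapping.lookup (Poly_Mapping.single a c * outer_coeff \<mu> q) m"
  proof (cases "\<exists>m'. m = a + m'")
    case True
    then obtain m' where m': "m = a + m'" by blast
    then have "\<mu> + rename_mon m = rename_mon a + (\<mu> + rename_mon m')"
      by (simp add: rename_mon_add add_ac)
    then show ?thesis
      using m' by (simp add: lookup_outer_coeff lookup_single_mult)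
  next
    case False
    have "\<mu> + rename_mon m \<noteq> rename_mon a + x" for x
    proof
      assume "\<mu> + rename_mon m = rename_mon a + x"
      then have "inner_part (\<mu> + rename_mon m) = inner_part (rename_mon a + x)" by simp
      then have "m = a + inner_part x"
        using inner_part_outer_monomial[OF \<mu>] by (simp add: inner_part_add)
      with False show False by blast
    qed
    then show ?thesis
      using False by (simp add: lookup_outer_coeff lookup_single_mult_eq_0)
  qed
qed

lemma outer_coeff_rename_mult:
  assumes "\<mu> \<in> outer_monomials"
  shows "outer_coeff \<mu> (rename_poly l * q) = l * outer_coeff \<mu> q"
proof -
  have "rename_poly l * q =
      (\<Sum>a\<in>Poly_Mapping.keys l. Poly_Mapping.single (rename_mon a) (Poly_Mapping.lookup l a) * q)"
    by (subst poly_mapping_sum_single[of l]) (simp only: rename_poly_sum rename_poly_single sum_distrib_right)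
  then have "outer_coeff \<mu> (rename_poly l * q) =
      (\<Sum>a\<in>Poly_Mapping.keys l. Poly_Mapping.single a (Poly_Mapping.lookup l a) * outer_coeff \<mu> q)"
    by (simp only: outer_coeff_sum outer_coeff_single_mult[OF assms])
  also have "\<dots> = l * outer_coeff \<mu> q"
    by (simp only: sum_distrib_right[symmetric] poly_mapping_sum_single[symmetric])
  finally show ?thesis .
qed

lemma outer_coeff_mult_rename:
  assumes "\<mu> \<in> outer_monomials"
  shows "outer_coeff \<mu> (q * rename_poly l) = outer_coeff \<mu> q * l"
  using outer_coeff_rename_mult[OF assms] by (simp add: mult.commute)

lemma outer_coeff_const_mult:
  assumes "\<mu> \<in> outer_monomials"
  shows "outer_coeff \<mu> (const_poly c * q) = const_poly c * outer_coeff \<mu> q"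
  using outer_coeff_rename_mult[OF assms, of "const_poly c"] by simp

lemma outer_coeff_expansion:
  assumes "finite U" "U \<subseteq> outer_monomials" "outer_part ` Poly_Mapping.keys p \<subseteq> U"
  shows "p = (\<Sum>\<mu>\<in>U. Poly_Mapping.single \<mu> 1 * rename_poly (outer_coeff \<mu> p))"
proof (rule poly_mapping_eqI)
  fix n
  have "Poly_Mapping.lookup (\<Sum>\<mu>\<in>U. Poly_Mapping.single \<mu> 1 * rename_poly (outer_coeff \<mu> p)) n =
      (\<Sum>\<mu>\<in>U. if outer_part n = \<mu> then Poly_Mapping.lookup (outer_coeff \<mu> p) (inner_part n) else 0)"
    unfolding lookup_sum using assms(2) by (intro sum.cong refl) (auto simp: lookup_outer_monomial_mult)
  also have "\<dots> = (if outer_part n \<in> U then Poly_Mapping.lookup p n else 0)"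
    using assms(1) by (simp add: sum.delta lookup_outer_coeff outer_inner_decomp[symmetric])
  also have "\<dots> = Poly_Mapping.lookup p n"
    using assms(3) by (metis image_subset_iff in_keys_iff)
  finally show "Poly_Mapping.lookup p n =
      Poly_Mapping.lookup (\<Sum>\<mu>\<in>U. Poly_Mapping.single \<mu> 1 * rename_poly (outer_coeff \<mu> p)) n" ..
qed

lemma poly_in_outer_coeff:
  assumes "W \<inter> range \<rho> = \<rho> ` Y" "poly_in W p"
  shows "poly_in Y (outer_coeff \<mu> p)"
  unfolding poly_in_def
proof (intro ballI subsetI)
  fix m u assume m: "m \<in> Poly_Mapping.keys (outer_coeff \<mu> p)" and u: "u \<in> Poly_Mapping.keys m"
  have "\<mu> + rename_mon m \<in> Poly_Mapping.keys p"
    using m by (simp add: in_keys_iff lookup_outer_coeff)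
  moreover have "\<rho> u \<in> Poly_Mapping.keys (\<mu> + rename_mon m)"
    using u by (simp add: in_keys_iff lookup_add)
  ultimately have "\<rho> u \<in> W \<inter> range \<rho>"
    using assms(2) unfolding poly_in_def by blast
  then show "u \<in> Y"
    using assms(1) inj_\<rho> by (auto dest: injD)
qed

definition rename_der :: "('u \<Rightarrow> ('u, 'k::comm_ring_1) mpoly) \<Rightarrow> 'w \<Rightarrow> ('w, 'k) mpoly" where
  "rename_der \<theta> w = (if w \<in> range \<rho> then rename_poly (\<theta> (inv \<rho> w)) else 0)"

lemma sum_image_\<rho>: "(\<Sum>w\<in>\<rho> ` Y. f w) = (\<Sum>u\<in>Y. f (\<rho> u))"
  using sum.reindex[OF inj_on_subset[OF inj_\<rho> subset_UNIV, of Y]] by (simp only: comp_def)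

lemma rename_der_apply [simp]: "rename_der \<theta> (\<rho> u) = rename_poly (\<theta> u)"
  unfolding rename_der_def using inj_\<rho> by simp

lemma rename_der_notin: "w \<notin> range \<rho> \<Longrightarrow> rename_der \<theta> w = 0"
  unfolding rename_der_def by simp

lemma rename_der_lincomb:
  "rename_der (\<lambda>u. \<Sum>b\<in>B. c b * b u) w = (\<Sum>b\<in>B. rename_poly (c b) * rename_der b w)"
  by (cases "w \<in> range \<rho>") (auto simp: rename_der_notin rename_poly_sum rename_poly_mult)

end

text \<open>Base change from \<open>K[Y]\<close> to \<open>K[W]\<close>, where \<open>\<rho>\<close> embeds \<open>Y\<close> into \<open>W\<close> and the forms
  of \<open>A\<close> only involve the coordinates \<open>\<rho> ` Y\<close>. As \<open>K[W]\<close> is free over \<open>K[Y]\<close> on the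
  outer monomials, a basis of \<open>D\<close> over \<open>K[Y]\<close> stays a basis over \<open>K[W]\<close>.\<close>

locale base_change = renaming \<rho> for \<rho> :: "'u \<Rightarrow> 'w" +
  fixes W :: "'w set" and Y :: "'u set" and A :: "('w \<Rightarrow> 'k::comm_ring_1) set"
  assumes finite_W: "finite W" and finite_Y: "finite Y"
    and W_range: "W \<inter> range \<rho> = \<rho> ` Y"
    and supp: "supported_on W (\<rho> ` Y) A"
begin

abbreviation "DY \<equiv> log_ders_on Y Y ((\<lambda>a. a \<circ> \<rho>) ` A)"
abbreviation "DW \<equiv> log_ders_on W (\<rho> ` Y) A"

lemma image_Y_W: "\<rho> ` Y \<subseteq> W"
  using W_range by blast

lemma image_in_W_iff: "\<rho> u \<in> W \<longleftrightarrow> u \<in> Y"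
  using W_range inj_\<rho> by (auto dest: injD)

lemma der_apply_pullback:
  assumes "a \<in> A"
  shows "der_apply W \<theta> a = (\<Sum>u\<in>Y. const_poly (a (\<rho> u)) * \<theta> (\<rho> u))"
proof -
  have "der_apply W \<theta> a = (\<Sum>w\<in>\<rho> ` Y. const_poly (a w) * \<theta> w)"
    using assms finite_W image_Y_W supp by (intro der_apply_eq_sum) (auto simp: supported_on_def)
  then show ?thesis
    by (simp only: sum_image_\<rho>)
qed

lemma lin_poly_pullback:
  assumes "a \<in> A"
  shows "lin_poly W a = rename_poly (lin_poly Y (a \<circ> \<rho>))"
proof -
  have "lin_poly W a = (\<Sum>w\<in>\<rho> ` Y. const_poly (a w) * var w)"
    using assms finite_W image_Y_W supp by (intro lin_poly_eq_sum) (auto simp: supported_on_def)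
  also have "\<dots> = (\<Sum>u\<in>Y. const_poly (a (\<rho> u)) * var (\<rho> u))"
    by (rule sum_image_\<rho>)
  also have "\<dots> = rename_poly (lin_poly Y (a \<circ> \<rho>))"
    by (simp add: lin_poly_def rename_poly_sum rename_poly_single const_poly_mult_var)
  finally show ?thesis .
qed

lemma rename_der_mem:
  assumes b: "b \<in> DY"
  shows "rename_der b \<in> DW"
proof -
  have b_zero: "b u = 0" if "u \<notin> Y" for u
    using b that by (simp add: log_ders_on_def)
  have "is_der W (rename_der b)"
    using b image_Y_W image_in_W_iff b_zero
    by (auto simp: is_der_def log_ders_on_def rename_der_def inv_f_f[OF inj_\<rho>]
        intro: poly_in_mono[OF poly_in_rename_poly])
  moreover have "rename_der b w = 0" if "w \<notin> \<rho> ` Y" for w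
    using that b_zero by (cases "w \<in> range \<rho>") (auto simp: rename_der_notin image_iff)
  moreover have "divides_in W (lin_poly W a) (der_apply W (rename_der b) a)" if a: "a \<in> A" for a
  proof -
    obtain q where q: "poly_in Y q" "der_apply Y b (a \<circ> \<rho>) = lin_poly Y (a \<circ> \<rho>) * q"
      using b a unfolding log_ders_on_def divides_in_def by blast
    have "der_apply W (rename_der b) a = (\<Sum>u\<in>Y. const_poly (a (\<rho> u)) * rename_poly (b u))"
      using a by (simp add: der_apply_pullback)
    also have "\<dots> = rename_poly (der_apply Y b (a \<circ> \<rho>))"
      by (simp add: der_apply_def rename_poly_sum rename_poly_mult)
    also have "\<dots> = lin_poly W a * rename_poly q"
      using a q(2) by (simp add: lin_poly_pullback rename_poly_mult)
    finally show ?thesis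
      unfolding divides_in_def using poly_in_mono[OF poly_in_rename_poly[OF q(1)] image_Y_W] by blast
  qed
  ultimately show ?thesis
    unfolding log_ders_on_def by blast
qed

definition outer_der :: "('w \<Rightarrow>\<^sub>0 nat) \<Rightarrow> ('w \<Rightarrow> ('w, 'k) mpoly) \<Rightarrow> 'u \<Rightarrow> ('u, 'k) mpoly" where
  "outer_der \<mu> \<theta> u = (if u \<in> Y then outer_coeff \<mu> (\<theta> (\<rho> u)) else 0)"

lemma outer_der_mem:
  assumes \<theta>: "\<theta> \<in> DW" and \<mu>: "\<mu> \<in> outer_monomials"
  shows "outer_der \<mu> \<theta> \<in> DY"
proof -
  have "is_der Y (outer_der \<mu> \<theta>)"
    using \<theta> image_in_W_iff
    by (auto simp: is_der_def log_ders_on_def outer_der_def intro: poly_in_outer_coeff[OF W_range])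
  moreover have "divides_in Y (lin_poly Y (a \<circ> \<rho>)) (der_apply Y (outer_der \<mu> \<theta>) (a \<circ> \<rho>))"
    if a: "a \<in> A" for a
  proof -
    obtain q where q: "poly_in W q" "der_apply W \<theta> a = lin_poly W a * q"
      using \<theta> a unfolding log_ders_on_def divides_in_def by blast
    have "der_apply Y (outer_der \<mu> \<theta>) (a \<circ> \<rho>) = (\<Sum>u\<in>Y. const_poly (a (\<rho> u)) * outer_coeff \<mu> (\<theta> (\<rho> u)))"
      by (simp add: der_apply_def outer_der_def)
    also have "\<dots> = outer_coeff \<mu> (der_apply W \<theta> a)"
      using a by (simp add: der_apply_pullback outer_coeff_sum outer_coeff_const_mult[OF \<mu>])
    also have "\<dots> = lin_poly Y (a \<circ> \<rho>) * outer_coeff \<mu> q"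
      using a \<mu> q(2) by (simp add: lin_poly_pullback outer_coeff_rename_mult)
    finally show ?thesis
      unfolding divides_in_def using poly_in_outer_coeff[OF W_range q(1)] by blast
  qed
  ultimately show ?thesis
    unfolding log_ders_on_def by (auto simp: outer_der_def)
qed

lemma outer_der_expansion:
  assumes \<theta>: "\<theta> \<in> DW"
  obtains U where "finite U" "U \<subseteq> outer_monomials" "\<forall>\<mu>\<in>U. poly_in W (Poly_Mapping.single \<mu> (1::'k))"
    "\<theta> = (\<lambda>w. \<Sum>\<mu>\<in>U. Poly_Mapping.single \<mu> 1 * rename_der (outer_der \<mu> \<theta>) w)"
proof
  let ?U = "\<Union>u\<in>Y. outer_part ` Poly_Mapping.keys (\<theta> (\<rho> u))"
  show "finite ?U" "?U \<subseteq> outer_monomials"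
    using finite_Y outer_part_mem by auto
  have poly_in_\<theta>: "poly_in W (\<theta> (\<rho> u))" if "u \<in> Y" for u
    using \<theta> that image_in_W_iff by (simp add: log_ders_on_def is_der_def)
  show "\<forall>\<mu>\<in>?U. poly_in W (Poly_Mapping.single \<mu> (1::'k))"
  proof
    fix \<mu> assume "\<mu> \<in> ?U"
    then obtain u n where "u \<in> Y" "n \<in> Poly_Mapping.keys (\<theta> (\<rho> u))" "\<mu> = outer_part n"
      by blast
    then have "Poly_Mapping.keys \<mu> \<subseteq> W"
      using poly_in_\<theta> keys_outer_part unfolding poly_in_def by blast
    then show "poly_in W (Poly_Mapping.single \<mu> (1::'k))"
      by (rule poly_in_single)
  qed
  show "\<theta> = (\<lambda>w. \<Sum>\<mu>\<in>?U. Poly_Mapping.single \<mu> 1 * rename_der (outer_der \<mu> \<theta>) w)"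
  proof
    fix w
    show "\<theta> w = (\<Sum>\<mu>\<in>?U. Poly_Mapping.single \<mu> 1 * rename_der (outer_der \<mu> \<theta>) w)"
    proof (cases "w \<in> \<rho> ` Y")
      case True
      then obtain u where u: "u \<in> Y" "w = \<rho> u" by blast
      have "\<theta> (\<rho> u) = (\<Sum>\<mu>\<in>?U. Poly_Mapping.single \<mu> 1 * rename_poly (outer_coeff \<mu> (\<theta> (\<rho> u))))"
        using finite_Y outer_part_mem u(1) by (intro outer_coeff_expansion) auto
      then show ?thesis
        using u by (simp add: outer_der_def)
    next
      case False
      then have "rename_der (outer_der \<mu> \<theta>) w = 0" for \<mu>
        by (cases "w \<in> range \<rho>") (auto simp: rename_der_notin outer_der_def)
      moreover have "\<theta> w = 0"
        using \<theta> False by (simp add: log_ders_on_def)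
      ultimately show ?thesis by simp
    qed
  qed
qed

lemma rename_der_spans:
  assumes B: "is_basis Y DY B" and \<theta>: "\<theta> \<in> DW"
  shows "\<exists>a. (\<forall>b\<in>B. poly_in W (a b)) \<and> \<theta> = (\<lambda>w. \<Sum>b\<in>B. a b * rename_der b w)"
proof -
  obtain U where U: "finite U" "U \<subseteq> outer_monomials" "\<forall>\<mu>\<in>U. poly_in W (Poly_Mapping.single \<mu> (1::'k))"
    and \<theta>_eq: "\<theta> = (\<lambda>w. \<Sum>\<mu>\<in>U. Poly_Mapping.single \<mu> 1 * rename_der (outer_der \<mu> \<theta>) w)"
    using \<theta> by (rule outer_der_expansion)
  have "\<forall>\<mu>\<in>U. \<exists>c. (\<forall>b\<in>B. poly_in Y (c b)) \<and> outer_der \<mu> \<theta> = (\<lambda>u. \<Sum>b\<in>B. c b * b u)"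
    using U(2) \<theta> by (blast intro: is_basis_spans[OF B] outer_der_mem)
  then obtain c where c: "\<forall>\<mu>\<in>U. (\<forall>b\<in>B. poly_in Y (c \<mu> b)) \<and> outer_der \<mu> \<theta> = (\<lambda>u. \<Sum>b\<in>B. c \<mu> b * b u)"
    by (auto dest!: bchoice)
  define a where "a b = (\<Sum>\<mu>\<in>U. Poly_Mapping.single \<mu> 1 * rename_poly (c \<mu> b))" for b
  have "poly_in W (a b)" if "b \<in> B" for b
  proof -
    have "poly_in W (rename_poly (c \<mu> b))" if "\<mu> \<in> U" for \<mu>
      using c that \<open>b \<in> B\<close> by (blast intro: poly_in_mono[OF poly_in_rename_poly image_Y_W])
    then show ?thesis
      unfolding a_def using U(3) by (intro poly_in_sum poly_in_mult) auto
  qed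
  moreover have "\<theta> w = (\<Sum>b\<in>B. a b * rename_der b w)" for w
  proof -
    have "\<theta> w = (\<Sum>\<mu>\<in>U. Poly_Mapping.single \<mu> 1 * (\<Sum>b\<in>B. rename_poly (c \<mu> b) * rename_der b w))"
      using c by (subst \<theta>_eq) (simp add: rename_der_lincomb cong: sum.cong)
    also have "\<dots> = (\<Sum>b\<in>B. a b * rename_der b w)"
      unfolding a_def by (simp add: sum_distrib_left sum_distrib_right mult.assoc) (rule sum.swap)
    finally show ?thesis .
  qed
  ultimately show ?thesis by blast
qed

lemma rename_der_indep:
  assumes B: "is_basis Y DY B"
    and d: "\<forall>b\<in>B. poly_in W (d b)" and d0: "\<forall>w. (\<Sum>b\<in>B. d b * rename_der b w) = 0"
  shows "\<forall>b\<in>B. d b = 0"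
proof -
  have outer_coeff_0: "\<forall>b\<in>B. outer_coeff \<mu> (d b) = 0" if \<mu>: "\<mu> \<in> outer_monomials" for \<mu>
  proof (rule is_basis_indep[OF B log_ders_on_zero])
    show "\<forall>b\<in>B. poly_in Y (outer_coeff \<mu> (d b))"
      using d poly_in_outer_coeff[OF W_range] by blast
    show "\<forall>u. (\<Sum>b\<in>B. outer_coeff \<mu> (d b) * b u) = 0"
    proof
      fix u
      have "(\<Sum>b\<in>B. outer_coeff \<mu> (d b) * b u) = outer_coeff \<mu> (\<Sum>b\<in>B. d b * rename_der b (\<rho> u))"
        by (simp add: outer_coeff_sum outer_coeff_mult_rename[OF \<mu>])
      then show "(\<Sum>b\<in>B. outer_coeff \<mu> (d b) * b u) = 0"
        using d0[rule_format, of "\<rho> u"] by simp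
    qed
  qed
  show ?thesis
  proof
    fix b assume "b \<in> B"
    have "d b = (\<Sum>\<mu>\<in>outer_part ` Poly_Mapping.keys (d b). Poly_Mapping.single \<mu> 1 * rename_poly (outer_coeff \<mu> (d b)))"
      using outer_part_mem by (intro outer_coeff_expansion) auto
    moreover have "outer_coeff \<mu> (d b) = 0" if "\<mu> \<in> outer_part ` Poly_Mapping.keys (d b)" for \<mu>
      using that outer_coeff_0 outer_part_mem \<open>b \<in> B\<close> by blast
    ultimately show "d b = 0"
      by simp
  qed
qed

lemma is_basis_rename_der:
  assumes "is_basis Y DY B"
  shows "is_basis W DW (rename_der ` B)"
proof (rule is_basis_image)
  show "finite B" "rename_der ` B \<subseteq> DW"
    using assms rename_der_mem by (auto simp: is_basis_def)
qed (use assms rename_der_spans rename_der_indep in blast)+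

lemma free_module_base_change: "free_module Y DY \<Longrightarrow> free_module W DW"
  using is_basis_rename_der by (auto simp: free_module_def)

end

section \<open>Cones of direct sums\<close>

definition cone_sum_vars :: "(nat \<Rightarrow> 'v set) \<Rightarrow> nat set \<Rightarrow> (nat \<times> 'v) option set" where
  "cone_sum_vars X J = insert None (Some ` {(i, v). i \<in> J \<and> v \<in> X i})"

definition cone_sum_form :: "nat \<Rightarrow> ('v \<Rightarrow> 'k::comm_ring_1) \<times> 'k \<Rightarrow> (nat \<times> 'v) option \<Rightarrow> 'k" where
  "cone_sum_form i h u = (case u of None \<Rightarrow> - snd h | Some (j, v) \<Rightarrow> if j = i then fst h v else 0)"

definition cone_sum_forms ::
  "(nat \<Rightarrow> (('v \<Rightarrow> 'k::comm_ring_1) \<times> 'k) set) \<Rightarrow> nat set \<Rightarrow> ((nat \<times> 'v) option \<Rightarrow> 'k) set" where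
  "cone_sum_forms A J = insert x0_form (\<Union>i\<in>J. cone_sum_form i ` A i)"

lemma cone_vars_dsum_vars: "cone_vars (dsum_vars k X) = cone_sum_vars X {..<k}"
  unfolding cone_sum_vars_def cone_vars_def dsum_vars_def by auto

lemma cone_dsum:
  fixes A :: "nat \<Rightarrow> (('v \<Rightarrow> 'k::comm_ring_1) \<times> 'k) set"
  shows "cone (dsum k A) = cone_sum_forms A {..<k}"
proof -
  have "(\<lambda>(\<alpha>, c). case_option (- c) \<alpha>) \<circ> (\<lambda>(\<alpha>, c). (\<lambda>(j, v). if j = i then \<alpha> v else 0, c)) =
      (cone_sum_form i :: _ \<Rightarrow> (nat \<times> 'v) option \<Rightarrow> 'k)" for i
    by (auto simp: cone_sum_form_def fun_eq_iff split: option.splits)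
  moreover have "(\<lambda>u. if u = None then 1 else 0) = (x0_form :: (nat \<times> 'v) option \<Rightarrow> 'k)"
    by (simp add: x0_form_def fun_eq_iff)
  ultimately show ?thesis
    unfolding cone_def dsum_def cone_sum_forms_def image_UN image_comp by simp
qed

lemma cone_sum_vars_union: "cone_sum_vars X (J1 \<union> J2) = cone_sum_vars X J1 \<union> cone_sum_vars X J2"
  unfolding cone_sum_vars_def by auto

lemma cone_sum_forms_union: "cone_sum_forms A (J1 \<union> J2) = cone_sum_forms A J1 \<union> cone_sum_forms A J2"
  unfolding cone_sum_forms_def by auto

lemma cone_sum_vars_mono: "J1 \<subseteq> J2 \<Longrightarrow> cone_sum_vars X J1 \<subseteq> cone_sum_vars X J2"
  unfolding cone_sum_vars_def by auto

lemma finite_cone_sum_vars: "finite J \<Longrightarrow> \<forall>i\<in>J. finite (X i) \<Longrightarrow> finite (cone_sum_vars X J)"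
  unfolding cone_sum_vars_def by (simp add: Collect_case_prod_Sigma)

lemma supported_on_cone_sum_forms:
  "J \<subseteq> K \<Longrightarrow> supported_on (cone_sum_vars X K) (cone_sum_vars X J) (cone_sum_forms A J)"
  unfolding supported_on_def cone_sum_vars_def cone_sum_forms_def
  by (auto simp: x0_form_def cone_sum_form_def)

lemma image_cone_vars: "map_option (Pair j) ` cone_vars (X j) = cone_sum_vars X {j}"
  unfolding cone_vars_def cone_sum_vars_def by (force simp: image_image)

lemma cone_sum_vars_inter_range:
  assumes "j \<in> K"
  shows "cone_sum_vars X K \<inter> range (map_option (Pair j)) = cone_sum_vars X {j}"
proof
  show "cone_sum_vars X K \<inter> range (map_option (Pair j)) \<subseteq> cone_sum_vars X {j}"
  proof
    fix w assume w: "w \<in> cone_sum_vars X K \<inter> range (map_option (Pair j))"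
    then obtain x where "w = map_option (Pair j) x" by blast
    with w show "w \<in> cone_sum_vars X {j}"
      by (cases x) (auto simp: cone_sum_vars_def)
  qed
  show "cone_sum_vars X {j} \<subseteq> cone_sum_vars X K \<inter> range (map_option (Pair j))"
    using assms cone_sum_vars_mono[of "{j}" K X] unfolding image_cone_vars[symmetric] by blast
qed

lemma cone_sum_form_pullback: "cone_sum_form j h \<circ> map_option (Pair j) = (case h of (\<alpha>, c) \<Rightarrow> case_option (- c) \<alpha>)"
  by (cases h) (auto simp: cone_sum_form_def fun_eq_iff split: option.splits)

lemma cone_sum_forms_pullback:
  fixes A :: "nat \<Rightarrow> (('v \<Rightarrow> 'k::comm_ring_1) \<times> 'k) set"
  shows "(\<lambda>a. a \<circ> map_option (Pair j)) ` cone_sum_forms A {j} = cone (A j)"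
proof -
  have x0: "x0_form \<circ> map_option (Pair j) = (\<lambda>u. if u = None then 1 else 0 :: 'k)"
    by (auto simp: x0_form_def fun_eq_iff)
  show ?thesis
    unfolding cone_sum_forms_def cone_def image_insert x0 by (simp add: image_image cone_sum_form_pullback)
qed

lemma free_module_cone_sum_component:
  fixes A :: "nat \<Rightarrow> (('v \<Rightarrow> 'k::comm_ring_1) \<times> 'k) set"
  assumes "finite K" "\<forall>i\<in>K. finite (X i)" "j \<in> K"
    and "free_arr (cone_vars (X j)) (cone (A j))"
  shows "free_module (cone_sum_vars X K)
    (log_ders_on (cone_sum_vars X K) (cone_sum_vars X {j}) (cone_sum_forms A {j}))"
proof -
  interpret base_change "map_option (Pair j)" "cone_sum_vars X K" "cone_vars (X j)" "cone_sum_forms A {j}"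
  proof
    show "inj (map_option (Pair j))"
      by (intro option.inj_map) (auto intro: injI)
    show "finite (cone_sum_vars X K)" "finite (cone_vars (X j))"
      using assms by (simp_all add: finite_cone_sum_vars cone_vars_def)
    show "cone_sum_vars X K \<inter> range (map_option (Pair j)) = map_option (Pair j) ` cone_vars (X j)"
      using assms(3) by (simp add: image_cone_vars cone_sum_vars_inter_range)
    show "supported_on (cone_sum_vars X K) (map_option (Pair j) ` cone_vars (X j)) (cone_sum_forms A {j})"
      using assms(3) by (simp add: image_cone_vars supported_on_cone_sum_forms)
  qed
  show ?thesis
    using free_module_base_change assms(4)
    by (simp add: free_arr_iff_free_module cone_sum_forms_pullback image_cone_vars)
qed

lemma free_module_cone_sum_prefix:
  fixes A :: "nat \<Rightarrow> (('v \<Rightarrow> 'k::comm_ring_1) \<times> 'k) set"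
  assumes "\<forall>i<k. finite (X i)" "\<forall>i<k. free_arr (cone_vars (X i)) (cone (A i))" "j \<le> k"
  shows "free_module (cone_sum_vars X {..<k})
    (log_ders_on (cone_sum_vars X {..<k}) (cone_sum_vars X {..<j}) (cone_sum_forms A {..<j}))"
  using assms(3)
proof (induction j)
  case 0
  have "cone_sum_vars X {..<0} = {None}" "cone_sum_forms A {..<0} = {x0_form}"
    by (simp_all add: cone_sum_vars_def cone_sum_forms_def)
  moreover have "finite (cone_sum_vars X {..<k})"
    using assms(1) by (simp add: finite_cone_sum_vars)
  moreover have "None \<in> cone_sum_vars X {..<k}"
    by (simp add: cone_sum_vars_def)
  ultimately show ?case
    using is_basis_x0_form by (auto simp: free_module_def)
next
  case (Suc j)
  have "{..<Suc j} = {..<j} \<union> {j}" by auto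
  moreover have "free_module (cone_sum_vars X {..<k})
      (log_ders_on (cone_sum_vars X {..<k}) (cone_sum_vars X {..<j} \<union> cone_sum_vars X {j})
        (cone_sum_forms A {..<j} \<union> cone_sum_forms A {j}))"
  proof (rule free_module_glue)
    show "finite (cone_sum_vars X {..<k})"
      using assms(1) by (simp add: finite_cone_sum_vars)
    show "cone_sum_vars X {..<j} \<subseteq> cone_sum_vars X {..<k}" "cone_sum_vars X {j} \<subseteq> cone_sum_vars X {..<k}"
      using Suc.prems by (simp_all add: cone_sum_vars_mono)
    show "None \<in> cone_sum_vars X {..<j}" "None \<in> cone_sum_vars X {j}"
      "cone_sum_vars X {..<j} \<inter> cone_sum_vars X {j} \<subseteq> {None}"
      by (auto simp: cone_sum_vars_def)
    show "x0_form \<in> cone_sum_forms A {..<j}" "x0_form \<in> cone_sum_forms A {j}"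
      by (simp_all add: cone_sum_forms_def)
    show "supported_on (cone_sum_vars X {..<k}) (cone_sum_vars X {..<j}) (cone_sum_forms A {..<j})"
      "supported_on (cone_sum_vars X {..<k}) (cone_sum_vars X {j}) (cone_sum_forms A {j})"
      using Suc.prems by (simp_all add: supported_on_cone_sum_forms)
    show "free_module (cone_sum_vars X {..<k})
        (log_ders_on (cone_sum_vars X {..<k}) (cone_sum_vars X {..<j}) (cone_sum_forms A {..<j}))"
      using Suc by simp
    show "free_module (cone_sum_vars X {..<k})
        (log_ders_on (cone_sum_vars X {..<k}) (cone_sum_vars X {j}) (cone_sum_forms A {j}))"
      using assms Suc.prems by (intro free_module_cone_sum_component) auto
  qed
  ultimately show ?case
    by (simp only: cone_sum_vars_union cone_sum_forms_union)
qed

theorem mainTheorem10: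
  fixes k :: nat
    and X :: "nat \<Rightarrow> 'v set"
    and A :: "nat \<Rightarrow> (('v \<Rightarrow> 'k::field) \<times> 'k) set"
  assumes "\<forall>i<k. finite (X i)"
    and "\<forall>i<k. aff_arr (X i) (A i)"
    and "\<forall>i<k. free_arr (cone_vars (X i)) (cone (A i))"
  shows "free_arr (cone_vars (dsum_vars k X)) (cone (dsum k A))"
  using free_module_cone_sum_prefix[OF assms(1,3) order_refl]
  by (simp add: free_arr_iff_free_module cone_vars_dsum_vars cone_dsum)

end
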